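(* Let $Q$ be a quiver with no oriented cycles, $\theta\in\mathbb{Z}^{Q_0}$, and let $\alpha_1\ne\alpha_2\in Q_1$ be arrows with $\alpha_1^-=\alpha_2^-$ and $\alpha_1^+=\alpha_2^+$. Let $Q'$ be obtained from $Q$ by collapsing $\alpha_1,\alpha_2$ to a single arrow $\alpha$, and let $\varphi:F\to\mathcal{A}(Q,\theta)$, $\varphi':F'\to\mathcal{A}(Q',\theta)$, $\pi:F\to F'$ and $\psi_s$ be as in the context. Let $\{u_\lambda-v_\lambda\mid\lambda\in\Lambda\}$ be a set of binomials generating the ideal $\ker(\varphi')$. Then $\ker(\varphi)$ is generated by $\mathcal{G}_1\cup\mathcal{G}_2$, where $\mathcal{G}_1=\{\psi_s(u_\lambda)-\psi_s(v_\lambda)\mid\lambda\in\Lambda,\ s\in S(Q,\theta),\ x^{\pi(s)}=\varphi'(u_\lambda)\}$ and $\mathcal{G}_2=\{t_mt_n-t_{m+\varepsilon_2-\varepsilon_1}t_{n+\varepsilon_1-\varepsilon_2}\mid m,n\in\nabla(Q,\theta)\cap\mathbb{Z}^{Q_1},\ m(\alpha_1)>0,\ n(\alpha_2)>0\}$, with $\varepsilon_i\in\mathbb{Z}^{Q_1}$ the characteristic function of $\alpha_i$.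
   Context: For a quiver $Q$ (vertices $Q_0$, arrows $Q_1$, $a$ from $a^-$ to $a^+$) and $\theta\in\mathbb{Z}^{Q_0}$, $\nabla(Q,\theta)=\{x\in\mathbb{R}_{\ge0}^{Q_1}\mid\forall v:\ \theta(v)=\sum_{a^+=v}x(a)-\sum_{a^-=v}x(a)\}$; $S(Q,\theta)=\coprod_{k\ge0}\nabla(Q,k\theta)\cap\mathbb{Z}^{Q_1}$ is a monoid. $x^m=\prod_ax(a)^{m(a)}$ in $\mathbb{C}[x(a)\mid a\in Q_1]$, $\mathcal{A}(Q,\theta)$ is the subalgebra generated by $x^m$, $m\in\nabla(Q,\theta)\cap\mathbb{Z}^{Q_1}$ (it has basis $x^s$, $s\in S(Q,\theta)$), $F=\mathbb{C}[t_m\mid m\in\nabla(Q,\theta)\cap\mathbb{Z}^{Q_1}]$ and $\varphi(t_m)=x^m$; similarly $F'$, $\varphi'$, $\mathcal{A}(Q',\theta)$ for $Q'$ (note $Q'_0=Q_0$). Define $\pi:\mathbb{Z}^{Q_1}\to\mathbb{Z}^{Q'_1}$ by $\pi(m)(\alpha)=m(\alpha_1)+m(\alpha_2)$ and $\pi(m)(\beta)=m(\beta)$ for $\beta\in Q_1\setminus\{\alpha_1,\alpha_2\}=Q'_1\setminus\{\alpha\}$; it maps $S(Q,\theta)$ onto $S(Q',\theta)$, and $\pi:F\to F'$ denotes the algebra map $t_m\mapsto t_{\pi(m)}$. For each monomial $u\in F'$ and each $s\in S(Q,\theta)$ with $x^{\pi(s)}=\varphi'(u)$, a monomial $\psi_s(u)\in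 F$ is fixed such that $\pi(\psi_s(u))=u$ and $\varphi(\psi_s(u))=x^s$ (such a monomial always exists). *)

theory Defs
  imports Complex_Main "HOL-Library.Poly_Mapping"
begin

text \<open>Commutative polynomial rings over the complex numbers in
  variables of type 'x are modelled as poly_mappings from exponent maps to complex (monomials are exponent maps).\<close>

definition is_quiver :: "'v set \<Rightarrow> 'a set \<Rightarrow> ('a \<Rightarrow> 'v) \<Rightarrow> ('a \<Rightarrow> 'v) \<Rightarrow> bool" where
  "is_quiver V A src tgt \<longleftrightarrow> finite V \<and> finite A \<and> src ` A \<subseteq> V \<and> tgt ` A \<subseteq> V"

definition no_oriented_cycles :: "'a set \<Rightarrow> ('a \<Rightarrow> 'v) \<Rightarrow> ('a \<Rightarrow> 'v) \<Rightarrow> bool" where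
  "no_oriented_cycles A src tgt \<longleftrightarrow>
     \<not> (\<exists>as. as \<noteq> [] \<and> set as \<subseteq> A \<and>
            (\<forall>i. Suc i < length as \<longrightarrow> tgt (as ! i) = src (as ! Suc i)) \<and>
            tgt (last as) = src (hd as))"

definition nabla_int :: "'v set \<Rightarrow> 'a set \<Rightarrow> ('a \<Rightarrow> 'v) \<Rightarrow> ('a \<Rightarrow> 'v) \<Rightarrow> ('v \<Rightarrow> int) \<Rightarrow> ('a \<Rightarrow> int) set" where
  "nabla_int V A src tgt \<theta> = {m. (\<forall>a. a \<notin> A \<longrightarrow> m a = 0) \<and> (\<forall>a\<in>A. 0 \<le> m a) \<and>
      (\<forall>v\<in>V. \<theta> v = (\<Sum>a\<in>{a\<in>A. tgt a = v}. m a) - (\<Sum>a\<in>{a\<in>A. src a = v}. m a))}"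

definition S_monoid :: "'v set \<Rightarrow> 'a set \<Rightarrow> ('a \<Rightarrow> 'v) \<Rightarrow> ('a \<Rightarrow> 'v) \<Rightarrow> ('v \<Rightarrow> int) \<Rightarrow> ('a \<Rightarrow> int) set" where
  "S_monoid V A src tgt \<theta> = (\<Union>k::nat. nabla_int V A src tgt (\<lambda>v. int k * \<theta> v))"

text \<open>Polynomial ring C[t_m | m in X] as a subset of the polynomial ring in all variables of type 'x.\<close>
definition polyring :: "'x set \<Rightarrow> (('x \<Rightarrow>\<^sub>0 nat) \<Rightarrow>\<^sub>0 complex) set" where
  "polyring X = {p :: ('x \<Rightarrow>\<^sub>0 nat) \<Rightarrow>\<^sub>0 complex. \<forall>u\<in>Poly_Mapping.keys p. Poly_Mapping.keys u \<subseteq> X}"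

definition monomials_in :: "'x set \<Rightarrow> ('x \<Rightarrow>\<^sub>0 nat) set" where
  "monomials_in X = {u. Poly_Mapping.keys u \<subseteq> X}"

definition mono :: "('x \<Rightarrow>\<^sub>0 nat) \<Rightarrow> (('x \<Rightarrow>\<^sub>0 nat) \<Rightarrow>\<^sub>0 complex)" where
  "mono u = Poly_Mapping.single u 1"

definition tvar :: "'x \<Rightarrow> (('x \<Rightarrow>\<^sub>0 nat) \<Rightarrow>\<^sub>0 complex)" where
  "tvar m = mono (Poly_Mapping.single m 1)"

definition ideal_gen_in :: "'r::comm_ring_1 set \<Rightarrow> 'r set \<Rightarrow> 'r set" where
  "ideal_gen_in R G = {p. \<exists>T c. finite T \<and> T \<subseteq> G \<and> (\<forall>g\<in>T. c g \<in> R) \<and> p = (\<Sum>g\<in>T. c g * g)}"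

definition xmon :: "'a set \<Rightarrow> ('a \<Rightarrow> int) \<Rightarrow> ('a \<Rightarrow>\<^sub>0 nat)" where
  "xmon A e = Abs_poly_mapping (\<lambda>a. if a \<in> A then nat (e a) else 0)"

text \<open>Exponent of phi applied to a monomial prod t_m^{u(m)}: sum of u(m) * m.\<close>
definition expsum :: "(('a \<Rightarrow> int) \<Rightarrow>\<^sub>0 nat) \<Rightarrow> ('a \<Rightarrow> int)" where
  "expsum u = (\<lambda>a. \<Sum>m\<in>Poly_Mapping.keys u. int (Poly_Mapping.lookup u m) * m a)"

text \<open>phi : t_m \<mapsto> x^m, extended as a C-algebra homomorphism.\<close>
definition phi :: "'a set \<Rightarrow> ((('a \<Rightarrow> int) \<Rightarrow>\<^sub>0 nat) \<Rightarrow>\<^sub>0 complex) \<Rightarrow> (('a \<Rightarrow>\<^sub>0 nat) \<Rightarrow>\<^sub>0 complex)" where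
  "phi A p = (\<Sum>u\<in>Poly_Mapping.keys p. Poly_Mapping.single (xmon A (expsum u)) (Poly_Mapping.lookup p u))"

definition ker_phi :: "'a set \<Rightarrow> ('a \<Rightarrow> int) set \<Rightarrow> ((('a \<Rightarrow> int) \<Rightarrow>\<^sub>0 nat) \<Rightarrow>\<^sub>0 complex) set" where
  "ker_phi A L = {p \<in> polyring L. phi A p = 0}"

text \<open>Collapsing alpha1, alpha2 into one arrow: Q' has arrows A - {alpha2}, where alpha1
  plays the role of the new arrow alpha. pi(m)(alpha) = m(alpha1) + m(alpha2).\<close>
definition pimap :: "'a \<Rightarrow> 'a \<Rightarrow> ('a \<Rightarrow> int) \<Rightarrow> ('a \<Rightarrow> int)" where
  "pimap \<alpha>1 \<alpha>2 m = (\<lambda>b. if b = \<alpha>1 then m \<alpha>1 + m \<alpha>2 else if b = \<alpha>2 then 0 else m b)"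

definition pimon :: "'a \<Rightarrow> 'a \<Rightarrow> (('a \<Rightarrow> int) \<Rightarrow>\<^sub>0 nat) \<Rightarrow> (('a \<Rightarrow> int) \<Rightarrow>\<^sub>0 nat)" where
  "pimon \<alpha>1 \<alpha>2 u = (\<Sum>m\<in>Poly_Mapping.keys u. Poly_Mapping.single (pimap \<alpha>1 \<alpha>2 m) (Poly_Mapping.lookup u m))"

definition charfun :: "'a \<Rightarrow> ('a \<Rightarrow> int)" where
  "charfun \<alpha> = (\<lambda>b. if b = \<alpha> then 1 else 0)"

end

theory Submission
  imports Defs
begin

text \<open>A polynomial lies in the kernel of phi iff it is a combination of binomials t^a - t^b whose
  monomials have the same exponent sum, so it suffices to show that any two such monomials a, b
  over nabla(Q,theta) are congruent modulo the ideal generated by G1 and G2. Their images under pi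
  have the same image under phi', hence are joined by a chain of moves w + u_i <-> w + v_i. Each
  move lifts to a congruence modulo G1, after first rearranging the lifted monomial within its
  pi-fibre. Within a pi-fibre, two monomials with the same exponent sum are congruent modulo G2:
  a G2 binomial moves one unit of weight from alpha1 to alpha2 between two factors, and by
  induction on the degree one makes the two monomials share a factor and cancels it.\<close>

section \<open>Monomials as finitely supported multisets\<close>

lemma update_eq_single_add:
  assumes "k \<notin> Poly_Mapping.keys f"
  shows "Poly_Mapping.update k b f = Poly_Mapping.single k b + f"
  using assms
  by (intro poly_mapping_eqI)
    (auto simp: Poly_Mapping.lookup_update lookup_add lookup_single in_keys_iff when_def)

lemma nat_poly_mapping_induct [case_names zero add]:
  fixes a :: "'k \<Rightarrow>\<^sub>0 nat"
  assumes zero: "P 0" and add: "\<And>m a. P a \<Longrightarrow> P (Poly_Mapping.single m 1 + a)"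
  shows "P a"
proof (induction a rule: Poly_Mapping.update_induct)
  case const
  show ?case using zero .
next
  case (update f k b)
  have "P (Poly_Mapping.single k n + f)" for n
  proof (induction n)
    case 0
    then show ?case using update by simp
  next
    case (Suc n)
    have "Poly_Mapping.single k (Suc n) + f = Poly_Mapping.single k 1 + (Poly_Mapping.single k n + f)"
      by (simp add: single_add[symmetric] add.assoc[symmetric])
    then show ?case using add[OF Suc] by simp
  qed
  then show ?case using update_eq_single_add[OF update(1)] by simp
qed

lemma keys_add_nat:
  "Poly_Mapping.keys (a + b :: 'k \<Rightarrow>\<^sub>0 nat) = Poly_Mapping.keys a \<union> Poly_Mapping.keys b"
  by (auto simp: in_keys_iff lookup_add)

lemma keys_diff_subset_nat: "Poly_Mapping.keys (a - b :: 'k \<Rightarrow>\<^sub>0 nat) \<subseteq> Poly_Mapping.keys a"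
  by (auto simp: in_keys_iff lookup_minus)

lemma split_off_key:
  fixes a :: "'k \<Rightarrow>\<^sub>0 nat"
  assumes "m \<in> Poly_Mapping.keys a"
  shows "a = Poly_Mapping.single m 1 + (a - Poly_Mapping.single m 1)"
  using assms
  by (intro poly_mapping_eqI) (auto simp: lookup_add lookup_minus lookup_single in_keys_iff when_def)

lemma add_eq_0_nat_poly_mapping:
  fixes y z :: "'k \<Rightarrow>\<^sub>0 nat"
  assumes "y + z = 0"
  shows "y = 0" "z = 0"
  using assms by (auto simp: poly_mapping_eq_iff fun_eq_iff lookup_add)

lemma sum_single_lookup:
  "(\<Sum>u\<in>Poly_Mapping.keys p. Poly_Mapping.single u (Poly_Mapping.lookup p u)) = p"
  by (rule poly_mapping_eqI) (auto simp: lookup_sum lookup_single when_def in_keys_iff)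

definition mdeg :: "('k \<Rightarrow>\<^sub>0 nat) \<Rightarrow> nat" where
  "mdeg a = sum (Poly_Mapping.lookup a) (Poly_Mapping.keys a)"

lemma mdeg_add: "mdeg (a + b) = mdeg a + mdeg b"
  unfolding mdeg_def by (rule setsum_keys_plus_distrib[where f = "\<lambda>k n. n", simplified])

lemma mdeg_single [simp]: "mdeg (Poly_Mapping.single m n) = n"
  by (simp add: mdeg_def)

lemma mdeg_eq_0_iff: "mdeg a = 0 \<longleftrightarrow> a = 0"
  by (auto simp: mdeg_def in_keys_iff poly_mapping_eqI)

section \<open>Ideals generated inside a subring\<close>

definition is_subring :: "'r::comm_ring_1 set \<Rightarrow> bool" where
  "is_subring R \<longleftrightarrow> 0 \<in> R \<and> 1 \<in> R \<and> (\<forall>x\<in>R. \<forall>y\<in>R. x + y \<in> R \<and> x * y \<in> R) \<and> (\<forall>x\<in>R. - x \<in> R)"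

lemma is_subring_sum:
  assumes R: "is_subring R" and "finite T" and "\<And>x. x \<in> T \<Longrightarrow> f x \<in> R"
  shows "(\<Sum>x\<in>T. f x) \<in> R"
  using assms(2,3) by (induction T rule: finite_induct) (use R in \<open>simp_all add: is_subring_def\<close>)

lemma is_subring_diff: "is_subring R \<Longrightarrow> x \<in> R \<Longrightarrow> y \<in> R \<Longrightarrow> x - y \<in> R"
  unfolding is_subring_def diff_conv_add_uminus by blast

lemma is_subring_polyring: "is_subring (polyring X)"
proof -
  have "x + y \<in> polyring X" if "x \<in> polyring X" "y \<in> polyring X" for x y
    using that keys_add[of x y] unfolding polyring_def by blast
  moreover have "x * y \<in> polyring X" if "x \<in> polyring X" "y \<in> polyring X" for x y
    using that keys_mult[of x y] unfolding polyring_def by (fastforce simp: keys_add_nat)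
  moreover have "- x \<in> polyring X" if "x \<in> polyring X" for x
    using that unfolding polyring_def by simp
  moreover have "0 \<in> polyring X" "1 \<in> polyring X"
    unfolding polyring_def by simp_all
  ultimately show ?thesis unfolding is_subring_def by blast
qed

lemma mono_in_polyring_iff: "mono u \<in> polyring X \<longleftrightarrow> Poly_Mapping.keys u \<subseteq> X"
  by (simp add: mono_def polyring_def)

lemma const_in_polyring: "Poly_Mapping.single 0 c \<in> polyring X"
  by (simp add: polyring_def)

lemma mono_add_eq_mult: "mono (a + b) = mono a * mono b"
  by (simp add: mono_def mult_single)

lemma mono_eq_iff: "mono a = mono b \<longleftrightarrow> a = b"
  by (auto simp: mono_def poly_mapping_eq_iff fun_eq_iff lookup_single when_def split: if_splits)

lemma ideal_gen_in_0: "0 \<in> ideal_gen_in R G"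
  unfolding ideal_gen_in_def by (intro CollectI exI[of _ "{}"]) auto

lemma ideal_gen_in_generator: "is_subring R \<Longrightarrow> g \<in> G \<Longrightarrow> g \<in> ideal_gen_in R G"
  unfolding ideal_gen_in_def is_subring_def
  by (intro CollectI exI[of _ "{g}"] exI[of _ "\<lambda>_. 1"]) auto

lemma ideal_gen_in_add:
  assumes R: "is_subring R" and "p \<in> ideal_gen_in R G" and "q \<in> ideal_gen_in R G"
  shows "p + q \<in> ideal_gen_in R G"
proof -
  obtain T1 c1 where T1: "finite T1" "T1 \<subseteq> G" "\<forall>g\<in>T1. c1 g \<in> R" "p = (\<Sum>g\<in>T1. c1 g * g)"
    using assms(2) unfolding ideal_gen_in_def by blast
  obtain T2 c2 where T2: "finite T2" "T2 \<subseteq> G" "\<forall>g\<in>T2. c2 g \<in> R" "q = (\<Sum>g\<in>T2. c2 g * g)"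
    using assms(3) unfolding ideal_gen_in_def by blast
  define c where "c g = (if g \<in> T1 then c1 g else 0) + (if g \<in> T2 then c2 g else 0)" for g
  have "(\<Sum>g\<in>T1 \<union> T2. (if g \<in> T then d g else 0) * g) = (\<Sum>g\<in>T. d g * g)"
    if "T \<subseteq> T1 \<union> T2" for T d
    using that T1(1) T2(1) by (simp add: if_distrib[of "\<lambda>x. x * _"] sum.If_cases Int_absorb1)
  then have "p + q = (\<Sum>g\<in>T1 \<union> T2. c g * g)"
    unfolding c_def distrib_right sum.distrib T1(4) T2(4) by simp
  moreover have "\<forall>g\<in>T1 \<union> T2. c g \<in> R"
    using T1(3) T2(3) R unfolding c_def is_subring_def by auto
  ultimately show ?thesis unfolding ideal_gen_in_def using T1 T2
    by (intro CollectI exI[of _ "T1 \<union> T2"] exI[of _ c]) auto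
qed

lemma ideal_gen_in_mult:
  assumes R: "is_subring R" and "r \<in> R" and "p \<in> ideal_gen_in R G"
  shows "r * p \<in> ideal_gen_in R G"
proof -
  obtain T c where T: "finite T" "T \<subseteq> G" "\<forall>g\<in>T. c g \<in> R" "p = (\<Sum>g\<in>T. c g * g)"
    using assms(3) unfolding ideal_gen_in_def by blast
  have "r * p = (\<Sum>g\<in>T. (r * c g) * g)"
    unfolding T(4) by (simp add: sum_distrib_left mult.assoc)
  moreover have "\<forall>g\<in>T. r * c g \<in> R" using T(3) R \<open>r \<in> R\<close> unfolding is_subring_def by blast
  ultimately show ?thesis unfolding ideal_gen_in_def using T(1,2)
    by (intro CollectI exI[of _ T] exI[of _ "\<lambda>g. r * c g"]) simp
qed

lemma ideal_gen_in_uminus: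
  assumes "is_subring R" and "p \<in> ideal_gen_in R G"
  shows "- p \<in> ideal_gen_in R G"
proof -
  have "- 1 \<in> R" using assms(1) unfolding is_subring_def by blast
  from ideal_gen_in_mult[OF assms(1) this assms(2)] show ?thesis by simp
qed

lemma ideal_gen_in_sum:
  assumes "is_subring R" and "finite T" and "\<And>x. x \<in> T \<Longrightarrow> f x \<in> ideal_gen_in R G"
  shows "(\<Sum>x\<in>T. f x) \<in> ideal_gen_in R G"
  using assms(2,3)
  by (induction T rule: finite_induct) (auto simp: ideal_gen_in_0 ideal_gen_in_add[OF assms(1)])

lemma ideal_gen_in_subset:
  assumes R: "is_subring R" and "G \<subseteq> R"
  shows "ideal_gen_in R G \<subseteq> R"
proof
  fix p assume "p \<in> ideal_gen_in R G"
  then obtain T c where T: "finite T" "T \<subseteq> G" "\<forall>g\<in>T. c g \<in> R" "p = (\<Sum>g\<in>T. c g * g)"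
    unfolding ideal_gen_in_def by blast
  have "c g * g \<in> R" if "g \<in> T" for g
    using that T(2,3) assms(2) R unfolding is_subring_def by blast
  then show "p \<in> R" unfolding T(4) by (rule is_subring_sum[OF R T(1)])
qed

section \<open>Binomial ideals and moves\<close>

definition binomial_equiv ::
    "(('x \<Rightarrow>\<^sub>0 nat) \<Rightarrow>\<^sub>0 complex) set \<Rightarrow> (('x \<Rightarrow>\<^sub>0 nat) \<Rightarrow>\<^sub>0 complex) set \<Rightarrow>
      ('x \<Rightarrow>\<^sub>0 nat) \<Rightarrow> ('x \<Rightarrow>\<^sub>0 nat) \<Rightarrow> bool" where
  "binomial_equiv R G a b \<longleftrightarrow> mono a - mono b \<in> ideal_gen_in R G"

lemma binomial_equiv_refl: "binomial_equiv R G a a"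
  unfolding binomial_equiv_def by (simp add: ideal_gen_in_0)

lemma binomial_equiv_sym: "is_subring R \<Longrightarrow> binomial_equiv R G a b \<Longrightarrow> binomial_equiv R G b a"
  unfolding binomial_equiv_def by (metis ideal_gen_in_uminus minus_diff_eq)

lemma binomial_equiv_trans:
  "is_subring R \<Longrightarrow> binomial_equiv R G a b \<Longrightarrow> binomial_equiv R G b c \<Longrightarrow> binomial_equiv R G a c"
  unfolding binomial_equiv_def using ideal_gen_in_add[of R "mono a - mono b" G "mono b - mono c"] by simp

lemma binomial_equiv_add_right:
  assumes "is_subring R" and "mono c \<in> R" and "binomial_equiv R G a b"
  shows "binomial_equiv R G (a + c) (b + c)"
proof -
  have "mono c * (mono a - mono b) \<in> ideal_gen_in R G"
    using ideal_gen_in_mult[OF assms(1,2)] assms(3) unfolding binomial_equiv_def .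
  then show ?thesis unfolding binomial_equiv_def by (simp add: mono_add_eq_mult algebra_simps)
qed

definition binomial_move ::
    "('l \<Rightarrow> ('x \<Rightarrow>\<^sub>0 nat)) \<Rightarrow> ('l \<Rightarrow> ('x \<Rightarrow>\<^sub>0 nat)) \<Rightarrow> ('x \<Rightarrow>\<^sub>0 nat) \<Rightarrow> ('x \<Rightarrow>\<^sub>0 nat) \<Rightarrow> bool" where
  "binomial_move u v x y \<longleftrightarrow> (\<exists>w i. x = w + u i \<and> y = w + v i \<or> x = w + v i \<and> y = w + u i)"

definition coeff_mass :: "('x \<Rightarrow>\<^sub>0 nat) set \<Rightarrow> (('x \<Rightarrow>\<^sub>0 nat) \<Rightarrow>\<^sub>0 complex) \<Rightarrow> complex" where
  "coeff_mass C p = (\<Sum>x\<in>Poly_Mapping.keys p. if x \<in> C then Poly_Mapping.lookup p x else 0)"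

lemma coeff_mass_0 [simp]: "coeff_mass C 0 = 0"
  by (simp add: coeff_mass_def)

lemma coeff_mass_add: "coeff_mass C (p + q) = coeff_mass C p + coeff_mass C q"
  unfolding coeff_mass_def by (rule setsum_keys_plus_distrib) auto

lemma coeff_mass_single: "coeff_mass C (Poly_Mapping.single x c) = (if x \<in> C then c else 0)"
  by (simp add: coeff_mass_def)

lemma coeff_mass_diff: "coeff_mass C (p - q) = coeff_mass C p - coeff_mass C q"
  using coeff_mass_add[of C "p - q" q] by simp

lemma coeff_mass_sum: "finite T \<Longrightarrow> coeff_mass C (\<Sum>g\<in>T. f g) = (\<Sum>g\<in>T. coeff_mass C (f g))"
  by (induction T rule: finite_induct) (simp_all add: coeff_mass_add)

lemma coeff_mass_mult_mono: "coeff_mass C (c * mono w) = coeff_mass {z. z + w \<in> C} c"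
proof (induction c rule: Poly_Mapping.update_induct)
  case const
  then show ?case by (simp add: coeff_mass_def)
next
  case (update f k b)
  then show ?case
    by (simp add: update_eq_single_add distrib_right coeff_mass_add mono_def mult_single coeff_mass_single)
qed

text \<open>The monomials reachable from a are closed under moves, so summing the coefficients over
  them is a linear functional vanishing on the ideal but not on t^a - t^b.\<close>
lemma binomial_ideal_moves:
  assumes "mono a - mono b \<in> ideal_gen_in R (range (\<lambda>i. mono (u i) - mono (v i)))"
  shows "(binomial_move u v)\<^sup>*\<^sup>* a b"
proof (rule ccontr)
  assume not_reachable: "\<not> (binomial_move u v)\<^sup>*\<^sup>* a b"
  define C where "C = {x. (binomial_move u v)\<^sup>*\<^sup>* a x}"
  have closed: "z + u i \<in> C \<longleftrightarrow> z + v i \<in> C" for z i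
    unfolding C_def binomial_move_def by (blast intro: rtranclp.rtrancl_into_rtrancl)
  have vanish: "coeff_mass C (c * (mono (u i) - mono (v i))) = 0" for c i
    using closed by (simp add: right_diff_distrib coeff_mass_diff coeff_mass_mult_mono)
  obtain T c where T: "finite T" "T \<subseteq> range (\<lambda>i. mono (u i) - mono (v i))"
    "mono a - mono b = (\<Sum>g\<in>T. c g * g)"
    using assms unfolding ideal_gen_in_def by blast
  have "coeff_mass C (mono a - mono b) = (\<Sum>g\<in>T. coeff_mass C (c g * g))"
    unfolding T(3) by (rule coeff_mass_sum[OF T(1)])
  also have "\<dots> = 0" using T(2) vanish by (intro sum.neutral) blast
  finally show False
    using not_reachable unfolding C_def by (simp add: mono_def coeff_mass_diff coeff_mass_single)
qed

section \<open>The monomial maps phi and pi\<close>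

lemma expsum_add: "expsum (a + b) = (\<lambda>x. expsum a x + expsum b x)"
proof
  fix x
  show "expsum (a + b) x = expsum a x + expsum b x"
    unfolding expsum_def
    by (rule setsum_keys_plus_distrib[where f = "\<lambda>m n. int n * m x"]) (auto simp: algebra_simps)
qed

lemma expsum_single [simp]: "expsum (Poly_Mapping.single m n) = (\<lambda>x. int n * m x)"
  by (simp add: expsum_def fun_eq_iff)

lemma expsum_0 [simp]: "expsum 0 = (\<lambda>x. 0)"
  by (simp add: expsum_def fun_eq_iff)

lemma expsum_pos_imp_factor:
  assumes "0 < expsum a x"
  shows "\<exists>n\<in>Poly_Mapping.keys a. 0 < n x"
proof (rule ccontr)
  assume "\<not> ?thesis"
  then have "expsum a x \<le> 0"
    unfolding expsum_def by (intro sum_nonpos) (auto simp: mult_nonneg_nonpos)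
  then show False using assms by simp
qed

lemma pimon_add: "pimon a1 a2 (a + b) = pimon a1 a2 a + pimon a1 a2 b"
  unfolding pimon_def by (rule setsum_keys_plus_distrib) (auto simp: single_add)

lemma pimon_single [simp]:
  "pimon a1 a2 (Poly_Mapping.single m n) = Poly_Mapping.single (pimap a1 a2 m) n"
  by (simp add: pimon_def)

lemma pimon_0 [simp]: "pimon a1 a2 0 = 0"
  by (simp add: pimon_def)

lemma expsum_pimon: "expsum (pimon a1 a2 a) = pimap a1 a2 (expsum a)"
  by (induction a rule: nat_poly_mapping_induct)
    (auto simp: pimon_add expsum_add pimap_def fun_eq_iff)

lemma mdeg_pimon: "mdeg (pimon a1 a2 a) = mdeg a"
  by (induction a rule: nat_poly_mapping_induct) (auto simp: pimon_add mdeg_add)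

lemma keys_pimon: "Poly_Mapping.keys (pimon a1 a2 a) \<subseteq> pimap a1 a2 ` Poly_Mapping.keys a"
  by (induction a rule: nat_poly_mapping_induct) (auto simp: pimon_add keys_add_nat)

lemma pimap_in_keys_pimon:
  "m \<in> Poly_Mapping.keys a \<Longrightarrow> pimap a1 a2 m \<in> Poly_Mapping.keys (pimon a1 a2 a)"
  by (subst split_off_key[of m a]) (auto simp: pimon_add keys_add_nat)

lemma pimon_eq_add_split:
  "pimon a1 a2 x = y + z \<Longrightarrow> \<exists>x1 x2. x = x1 + x2 \<and> pimon a1 a2 x1 = y \<and> pimon a1 a2 x2 = z"
proof (induction x arbitrary: y z rule: nat_poly_mapping_induct)
  case zero
  then show ?case using add_eq_0_nat_poly_mapping[of y z] by (auto intro!: exI[of _ 0])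
next
  case (add m x y z)
  let ?s = "Poly_Mapping.single (pimap a1 a2 m) 1"
  have eq: "?s + pimon a1 a2 x = y + z" using add.prems by (simp add: pimon_add)
  then have "0 < Poly_Mapping.lookup (y + z) (pimap a1 a2 m)"
    unfolding eq[symmetric] by (simp add: lookup_add)
  then consider "pimap a1 a2 m \<in> Poly_Mapping.keys y" | "pimap a1 a2 m \<in> Poly_Mapping.keys z"
    by (auto simp: lookup_add in_keys_iff)
  then show ?case
  proof cases
    case 1
    have "?s + pimon a1 a2 x = ?s + ((y - ?s) + z)"
      using eq by (subst (asm) split_off_key[OF 1]) (simp add: add.assoc)
    then have "pimon a1 a2 x = (y - ?s) + z" by simp
    from add.IH[OF this] obtain x1 x2
      where "x = x1 + x2" "pimon a1 a2 x1 = y - ?s" "pimon a1 a2 x2 = z"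
      by blast
    then show ?thesis using split_off_key[OF 1, symmetric]
      by (intro exI[of _ "Poly_Mapping.single m 1 + x1"] exI[of _ x2]) (auto simp: add.assoc pimon_add)
  next
    case 2
    have "?s + pimon a1 a2 x = ?s + (y + (z - ?s))"
      using eq by (subst (asm) split_off_key[OF 2]) (simp add: ac_simps)
    then have "pimon a1 a2 x = y + (z - ?s)" by simp
    from add.IH[OF this] obtain x1 x2
      where "x = x1 + x2" "pimon a1 a2 x1 = y" "pimon a1 a2 x2 = z - ?s"
      by blast
    then show ?thesis using split_off_key[OF 2, symmetric]
      by (intro exI[of _ x1] exI[of _ "Poly_Mapping.single m 1 + x2"]) (auto simp: ac_simps pimon_add)
  qed
qed

lemma phi_add: "phi A (p + q) = phi A p + phi A q"
  unfolding phi_def by (rule setsum_keys_plus_distrib) (auto simp: single_add)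

lemma phi_single [simp]: "phi A (Poly_Mapping.single u c) = Poly_Mapping.single (xmon A (expsum u)) c"
  by (simp add: phi_def)

lemma phi_0 [simp]: "phi A 0 = 0"
  by (simp add: phi_def)

lemma phi_diff: "phi A (p - q) = phi A p - phi A q"
  using phi_add[of A "p - q" q] by simp

lemma phi_sum: "finite T \<Longrightarrow> phi A (\<Sum>g\<in>T. f g) = (\<Sum>g\<in>T. phi A (f g))"
  by (induction T rule: finite_induct) (auto simp: phi_add)

lemma phi_mono: "phi A (mono u) = mono (xmon A (expsum u))"
  by (simp add: mono_def)

lemma lookup_phi:
  "Poly_Mapping.lookup (phi A p) y =
    (\<Sum>u\<in>Poly_Mapping.keys p. if xmon A (expsum u) = y then Poly_Mapping.lookup p u else 0)"
  unfolding phi_def lookup_sum by (simp add: lookup_single when_def)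

lemma phi_mult_mono:
  assumes "\<And>w. w \<in> Poly_Mapping.keys r \<Longrightarrow>
             xmon A (expsum (w + a)) = xmon A (expsum w) + xmon A (expsum a)"
  shows "phi A (r * mono a) = phi A r * mono (xmon A (expsum a))"
  using assms
proof (induction r rule: Poly_Mapping.update_induct)
  case const
  then show ?case by simp
next
  case (update f k b)
  have keys: "Poly_Mapping.keys (Poly_Mapping.update k b f) = insert k (Poly_Mapping.keys f)"
    using update(2) by (simp add: Poly_Mapping.keys_update)
  have "xmon A (expsum (k + a)) = xmon A (expsum k) + xmon A (expsum a)"
    using update(4) keys by auto
  moreover have "phi A (f * mono a) = phi A f * mono (xmon A (expsum a))"
    using update(3,4) keys by auto
  ultimately show ?case
    unfolding update_eq_single_add[OF update(1)] distrib_right phi_add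
    by (simp add: mono_def mult_single)
qed

text \<open>A polynomial in the kernel of phi is a combination of the binomials t^u - t^{r u}, where
  r picks one representative in each fibre of the exponent map on the support.\<close>
lemma phi_kernel_in_ideal_gen:
  assumes "p \<in> polyring X" and "phi A p = 0"
    and binomials: "\<And>u u'. u \<in> Poly_Mapping.keys p \<Longrightarrow> u' \<in> Poly_Mapping.keys p \<Longrightarrow>
            xmon A (expsum u) = xmon A (expsum u') \<Longrightarrow> mono u - mono u' \<in> ideal_gen_in (polyring X) G"
  shows "p \<in> ideal_gen_in (polyring X) G"
proof -
  let ?e = "\<lambda>u. xmon A (expsum u)"
  define r where "r u = (SOME u'. u' \<in> Poly_Mapping.keys p \<and> ?e u' = ?e u)" for u
  have r: "r u \<in> Poly_Mapping.keys p" "?e (r u) = ?e u" if "u \<in> Poly_Mapping.keys p" for u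
    using someI[of "\<lambda>u'. u' \<in> Poly_Mapping.keys p \<and> ?e u' = ?e u" u] that unfolding r_def by auto
  have r_eq_iff: "r u = r u0 \<longleftrightarrow> ?e u = ?e u0"
    if "u \<in> Poly_Mapping.keys p" "u0 \<in> Poly_Mapping.keys p" for u u0
  proof
    assume "r u = r u0"
    then show "?e u = ?e u0" using r(2)[OF that(1)] r(2)[OF that(2)] by simp
  next
    assume "?e u = ?e u0"
    then show "r u = r u0" unfolding r_def by simp
  qed
  define q where "q = (\<Sum>u\<in>Poly_Mapping.keys p. Poly_Mapping.single (r u) (Poly_Mapping.lookup p u))"
  have "Poly_Mapping.lookup q z = 0" for z
  proof -
    have lookup_q: "Poly_Mapping.lookup q z =
        (\<Sum>u\<in>Poly_Mapping.keys p. if r u = z then Poly_Mapping.lookup p u else 0)"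
      unfolding q_def lookup_sum by (simp add: lookup_single when_def)
    show ?thesis
    proof (cases "z \<in> r ` Poly_Mapping.keys p")
      case True
      then obtain u0 where u0: "u0 \<in> Poly_Mapping.keys p" "z = r u0" by blast
      have "Poly_Mapping.lookup q z = Poly_Mapping.lookup (phi A p) (?e z)"
        unfolding lookup_q lookup_phi using r_eq_iff[OF _ u0(1)] r(2)[OF u0(1)] u0(2)
        by (intro sum.cong) auto
      then show ?thesis using \<open>phi A p = 0\<close> by simp
    next
      case False
      then show ?thesis unfolding lookup_q by (intro sum.neutral) auto
    qed
  qed
  then have "q = 0" by (simp add: poly_mapping_eqI)
  then have "p = (\<Sum>u\<in>Poly_Mapping.keys p.
      Poly_Mapping.single 0 (Poly_Mapping.lookup p u) * (mono u - mono (r u)))"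
    unfolding q_def by (simp add: mono_def right_diff_distrib mult_single sum_subtractf sum_single_lookup)
  also have "\<dots> \<in> ideal_gen_in (polyring X) G"
    using is_subring_polyring binomials r
    by (intro ideal_gen_in_sum ideal_gen_in_mult const_in_polyring) auto
  finally show ?thesis .
qed

lemma lookup_xmon:
  "finite A \<Longrightarrow> Poly_Mapping.lookup (xmon A e) = (\<lambda>a. if a \<in> A then nat (e a) else 0)"
  unfolding xmon_def by (rule lookup_Abs_poly_mapping) (auto intro: finite_subset)

lemma xmon_add:
  assumes "finite A" "\<forall>x\<in>A. 0 \<le> e1 x" "\<forall>x\<in>A. 0 \<le> e2 x"
  shows "xmon A (\<lambda>x. e1 x + e2 x) = xmon A e1 + xmon A e2"
  using assms by (intro poly_mapping_eqI) (auto simp: lookup_xmon lookup_add nat_add_distrib)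

lemma xmon_inj:
  assumes "finite A" and "\<And>x. 0 \<le> e1 x" "\<And>x. 0 \<le> e2 x"
    and "\<And>x. x \<notin> A \<Longrightarrow> e1 x = 0" "\<And>x. x \<notin> A \<Longrightarrow> e2 x = 0"
    and "xmon A e1 = xmon A e2"
  shows "e1 = e2"
proof
  fix x
  show "e1 x = e2 x"
  proof (cases "x \<in> A")
    case True
    have "Poly_Mapping.lookup (xmon A e1) x = Poly_Mapping.lookup (xmon A e2) x"
      using assms(6) by simp
    then have "nat (e1 x) = nat (e2 x)" using True by (simp add: lookup_xmon[OF assms(1)])
    then show ?thesis using assms(2,3)[of x] by simp
  qed (use assms in auto)
qed

section \<open>Lattice points of nabla(Q, theta) and the kernel of phi\<close>

lemma nabla_int_outside: "m \<in> nabla_int V A s t \<theta> \<Longrightarrow> x \<notin> A \<Longrightarrow> m x = 0"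
  by (simp add: nabla_int_def)

lemma nabla_int_nonneg: "m \<in> nabla_int V A s t \<theta> \<Longrightarrow> 0 \<le> m x"
  by (cases "x \<in> A") (auto simp: nabla_int_def)

lemma nabla_int_add:
  assumes "m \<in> nabla_int V A s t \<theta>1" "n \<in> nabla_int V A s t \<theta>2"
  shows "(\<lambda>a. m a + n a) \<in> nabla_int V A s t (\<lambda>v. \<theta>1 v + \<theta>2 v)"
  using assms by (auto simp: nabla_int_def sum.distrib)

lemma expsum_mem_nabla_int:
  assumes "Poly_Mapping.keys a \<subseteq> nabla_int V A s t \<theta>"
  shows "expsum a \<in> nabla_int V A s t (\<lambda>v. int (mdeg a) * \<theta> v)"
  using assms
proof (induction a rule: nat_poly_mapping_induct)
  case zero
  show ?case by (simp add: nabla_int_def mdeg_def)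
next
  case (add m a)
  then have "m \<in> nabla_int V A s t \<theta>" "expsum a \<in> nabla_int V A s t (\<lambda>v. int (mdeg a) * \<theta> v)"
    by (auto simp: keys_add_nat)
  from nabla_int_add[OF this] show ?case
    by (simp add: expsum_add mdeg_add algebra_simps)
qed

lemma expsum_mem_S_monoid:
  "Poly_Mapping.keys a \<subseteq> nabla_int V A s t \<theta> \<Longrightarrow> expsum a \<in> S_monoid V A s t \<theta>"
  unfolding S_monoid_def by (rule UN_I[of "mdeg a"]) (simp_all add: expsum_mem_nabla_int)

lemma S_monoid_nonneg: "m \<in> S_monoid V A s t \<theta> \<Longrightarrow> 0 \<le> m x"
  unfolding S_monoid_def by (auto intro: nabla_int_nonneg)

lemma S_monoid_outside: "m \<in> S_monoid V A s t \<theta> \<Longrightarrow> x \<notin> A \<Longrightarrow> m x = 0"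
  unfolding S_monoid_def by (auto intro: nabla_int_outside)

lemma expsum_nonneg: "Poly_Mapping.keys a \<subseteq> nabla_int V A s t \<theta> \<Longrightarrow> 0 \<le> expsum a x"
  unfolding expsum_def by (intro sum_nonneg mult_nonneg_nonneg) (auto intro: nabla_int_nonneg)

lemma expsum_outside:
  "Poly_Mapping.keys a \<subseteq> nabla_int V A s t \<theta> \<Longrightarrow> x \<notin> A \<Longrightarrow> expsum a x = 0"
  unfolding expsum_def by (intro sum.neutral) (auto dest: nabla_int_outside)

lemma xmon_expsum_eq_iff:
  assumes "finite A"
    and "Poly_Mapping.keys a \<subseteq> nabla_int V A s t \<theta>" "Poly_Mapping.keys b \<subseteq> nabla_int V A s t \<theta>"
  shows "xmon A (expsum a) = xmon A (expsum b) \<longleftrightarrow> expsum a = expsum b"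
proof
  assume "xmon A (expsum a) = xmon A (expsum b)"
  then show "expsum a = expsum b"
    by (intro xmon_inj[OF assms(1)])
      (use expsum_nonneg[OF assms(2)] expsum_nonneg[OF assms(3)]
        expsum_outside[OF assms(2)] expsum_outside[OF assms(3)] in auto)
qed simp

lemma phi_mult_binomial:
  fixes V :: "'v set" and A :: "'a set" and s t :: "'a \<Rightarrow> 'v" and \<theta> :: "'v \<Rightarrow> int"
  defines "L \<equiv> nabla_int V A s t \<theta>"
  assumes "finite A" and "c \<in> polyring L"
    and "Poly_Mapping.keys x \<subseteq> L" "Poly_Mapping.keys y \<subseteq> L" "expsum x = expsum y"
  shows "phi A (c * (mono x - mono y)) = 0"
proof -
  have "phi A (c * mono z) = phi A c * mono (xmon A (expsum z))" if "Poly_Mapping.keys z \<subseteq> L" for z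
  proof (rule phi_mult_mono)
    fix w assume "w \<in> Poly_Mapping.keys c"
    then have "Poly_Mapping.keys w \<subseteq> L" using \<open>c \<in> polyring L\<close> unfolding polyring_def by blast
    then have "\<forall>x\<in>A. 0 \<le> expsum w x" "\<forall>x\<in>A. 0 \<le> expsum z x"
      using that unfolding L_def by (simp_all add: expsum_nonneg)
    then show "xmon A (expsum (w + z)) = xmon A (expsum w) + xmon A (expsum z)"
      unfolding expsum_add by (rule xmon_add[OF assms(2)])
  qed
  then show ?thesis using assms(4-6) by (simp add: right_diff_distrib phi_diff)
qed

lemma ideal_gen_in_subset_ker_phi:
  fixes V :: "'v set" and A :: "'a set" and s t :: "'a \<Rightarrow> 'v" and \<theta> :: "'v \<Rightarrow> int"
  defines "L \<equiv> nabla_int V A s t \<theta>"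
  assumes "finite A"
    and G: "\<And>g. g \<in> G \<Longrightarrow> \<exists>x y. g = mono x - mono y \<and>
              Poly_Mapping.keys x \<subseteq> L \<and> Poly_Mapping.keys y \<subseteq> L \<and> expsum x = expsum y"
  shows "ideal_gen_in (polyring L) G \<subseteq> ker_phi A L"
proof
  fix p assume p: "p \<in> ideal_gen_in (polyring L) G"
  have "G \<subseteq> polyring L"
  proof
    fix g assume "g \<in> G"
    with G obtain x y where "g = mono x - mono y" "Poly_Mapping.keys x \<subseteq> L" "Poly_Mapping.keys y \<subseteq> L"
      by blast
    then show "g \<in> polyring L"
      by (simp add: is_subring_diff[OF is_subring_polyring] mono_in_polyring_iff)
  qed
  then have "p \<in> polyring L" using ideal_gen_in_subset[OF is_subring_polyring] p by blast
  obtain T c where T: "finite T" "T \<subseteq> G" "\<forall>g\<in>T. c g \<in> polyring L" "p = (\<Sum>g\<in>T. c g * g)"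
    using p unfolding ideal_gen_in_def by blast
  have "phi A (c g * g) = 0" if g: "g \<in> T" for g
  proof -
    obtain x y where xy: "g = mono x - mono y" "Poly_Mapping.keys x \<subseteq> L"
      "Poly_Mapping.keys y \<subseteq> L" "expsum x = expsum y"
      using G[of g] T(2) g by blast
    have "c g \<in> polyring L" using T(3) g by blast
    from phi_mult_binomial[OF assms(2) this[unfolded L_def] xy(2-4)[unfolded L_def]]
    show ?thesis using xy(1) by simp
  qed
  then have "phi A p = 0" unfolding T(4) phi_sum[OF T(1)] by simp
  with \<open>p \<in> polyring L\<close> show "p \<in> ker_phi A L" by (simp add: ker_phi_def)
qed

lemma ker_phi_subset_ideal_gen_in:
  fixes V :: "'v set" and A :: "'a set" and s t :: "'a \<Rightarrow> 'v" and \<theta> :: "'v \<Rightarrow> int"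
  defines "L \<equiv> nabla_int V A s t \<theta>"
  assumes "finite A"
    and equiv: "\<And>a b. Poly_Mapping.keys a \<subseteq> L \<Longrightarrow> Poly_Mapping.keys b \<subseteq> L \<Longrightarrow>
              expsum a = expsum b \<Longrightarrow> binomial_equiv (polyring L) G a b"
  shows "ker_phi A L \<subseteq> ideal_gen_in (polyring L) G"
proof
  fix p assume "p \<in> ker_phi A L"
  then have p: "p \<in> polyring L" "phi A p = 0" by (simp_all add: ker_phi_def)
  show "p \<in> ideal_gen_in (polyring L) G"
  proof (rule phi_kernel_in_ideal_gen[OF p])
    fix u u' assume "u \<in> Poly_Mapping.keys p" "u' \<in> Poly_Mapping.keys p"
      and "xmon A (expsum u) = xmon A (expsum u')"
    moreover have "Poly_Mapping.keys u \<subseteq> L" "Poly_Mapping.keys u' \<subseteq> L"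
      using p(1) calculation(1,2) unfolding polyring_def by blast+
    ultimately have "expsum u = expsum u'"
      using xmon_expsum_eq_iff[OF assms(2), of u V s t \<theta> u'] unfolding L_def by simp
    then show "mono u - mono u' \<in> ideal_gen_in (polyring L) G"
      using equiv \<open>Poly_Mapping.keys u \<subseteq> L\<close> \<open>Poly_Mapping.keys u' \<subseteq> L\<close>
      unfolding binomial_equiv_def by blast
  qed
qed

section \<open>Collapsing two parallel arrows\<close>

lemma sum_pimap:
  assumes "finite X" "a1 \<noteq> a2" "a1 \<in> X \<longleftrightarrow> a2 \<in> X"
  shows "(\<Sum>z\<in>X - {a2}. pimap a1 a2 m z) = (\<Sum>z\<in>X. m z)"
proof (cases "a2 \<in> X")
  case True
  then have a1: "a1 \<in> X - {a2}" using assms by auto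
  have "(\<Sum>z\<in>X - {a2}. pimap a1 a2 m z) = pimap a1 a2 m a1 + (\<Sum>z\<in>X - {a2} - {a1}. pimap a1 a2 m z)"
    using assms(1) a1 by (intro sum.remove) auto
  also have "pimap a1 a2 m a1 = m a1 + m a2"
    by (simp add: pimap_def)
  also have "(\<Sum>z\<in>X - {a2} - {a1}. pimap a1 a2 m z) = (\<Sum>z\<in>X - {a2} - {a1}. m z)"
    by (rule sum.cong) (auto simp: pimap_def)
  also have "m a1 + m a2 + (\<Sum>z\<in>X - {a2} - {a1}. m z) = (\<Sum>z\<in>X. m z)"
    using sum.remove[OF assms(1) True, of m] sum.remove[of "X - {a2}" a1 m] assms(1) a1 by simp
  finally show ?thesis .
next
  case False
  then show ?thesis using assms by (intro sum.cong) (auto simp: pimap_def)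
qed

locale arrow_collapse =
  fixes V :: "'v set" and A :: "'a set" and src tgt :: "'a \<Rightarrow> 'v"
    and \<theta> :: "'v \<Rightarrow> int" and \<alpha>1 \<alpha>2 :: 'a
  assumes quiver: "is_quiver V A src tgt"
    and arrows: "\<alpha>1 \<in> A" "\<alpha>2 \<in> A" "\<alpha>1 \<noteq> \<alpha>2"
    and same_ends: "src \<alpha>1 = src \<alpha>2" "tgt \<alpha>1 = tgt \<alpha>2"
begin

abbreviation L :: "('a \<Rightarrow> int) set" where "L \<equiv> nabla_int V A src tgt \<theta>"
abbreviation L' :: "('a \<Rightarrow> int) set" where "L' \<equiv> nabla_int V (A - {\<alpha>2}) src tgt \<theta>"

lemma finite_arrows: "finite A"
  using quiver by (simp add: is_quiver_def)

lemma pimap_mem_L': assumes "m \<in> L" shows "pimap \<alpha>1 \<alpha>2 m \<in> L'"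
proof -
  have outside: "pimap \<alpha>1 \<alpha>2 m a = 0" if "a \<notin> A - {\<alpha>2}" for a
  proof (cases "a = \<alpha>2")
    case True
    then show ?thesis using arrows(3) by (simp add: pimap_def)
  next
    case False
    with that arrows(1) have "a \<notin> A" "a \<noteq> \<alpha>1" by auto
    then show ?thesis using nabla_int_outside[OF assms] False by (simp add: pimap_def)
  qed
  have nonneg: "0 \<le> pimap \<alpha>1 \<alpha>2 m a" for a
    using nabla_int_nonneg[OF assms] by (simp add: pimap_def)
  have sums: "(\<Sum>a\<in>{a\<in>A - {\<alpha>2}. f a = v}. pimap \<alpha>1 \<alpha>2 m a) = (\<Sum>a\<in>{a\<in>A. f a = v}. m a)"
    if "f \<alpha>1 = f \<alpha>2" for f :: "'a \<Rightarrow> 'v" and v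
  proof -
    have "{a\<in>A - {\<alpha>2}. f a = v} = {a\<in>A. f a = v} - {\<alpha>2}" by blast
    then show ?thesis using finite_arrows arrows that by (simp add: sum_pimap)
  qed
  show ?thesis unfolding nabla_int_def mem_Collect_eq
  proof (intro conjI allI ballI impI outside nonneg)
    fix v assume "v \<in> V"
    then show "\<theta> v = (\<Sum>a\<in>{a\<in>A - {\<alpha>2}. tgt a = v}. pimap \<alpha>1 \<alpha>2 m a) -
        (\<Sum>a\<in>{a\<in>A - {\<alpha>2}. src a = v}. pimap \<alpha>1 \<alpha>2 m a)"
      using assms \<open>v \<in> V\<close> sums[of tgt v, OF same_ends(2)] sums[of src v, OF same_ends(1)]
      unfolding nabla_int_def by simp
  qed
qed

lemma keys_pimon_subset_L': "Poly_Mapping.keys a \<subseteq> L \<Longrightarrow> Poly_Mapping.keys (pimon \<alpha>1 \<alpha>2 a) \<subseteq> L'"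
  using keys_pimon[of \<alpha>1 \<alpha>2 a] pimap_mem_L' by blast

definition move_weight :: "('a \<Rightarrow> int) \<Rightarrow> int \<Rightarrow> 'a \<Rightarrow> int" where
  "move_weight m j = (\<lambda>b. m b + j * (charfun \<alpha>2 b - charfun \<alpha>1 b))"

lemma move_weight_mem_L:
  assumes "m \<in> L" "j \<le> m \<alpha>1" "- j \<le> m \<alpha>2"
  shows "move_weight m j \<in> L"
proof -
  have sums: "(\<Sum>a\<in>{a\<in>A. f a = v}. move_weight m j a) = (\<Sum>a\<in>{a\<in>A. f a = v}. m a)"
    if "f \<alpha>1 = f \<alpha>2" for f :: "'a \<Rightarrow> 'v" and v
  proof -
    let ?X = "{a\<in>A. f a = v}"
    have charfun_sum: "(\<Sum>a\<in>?X. charfun b a) = (if b \<in> ?X then 1 else 0)" for b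
      using finite_arrows by (simp add: charfun_def)
    have "(\<Sum>a\<in>?X. move_weight m j a) =
        (\<Sum>a\<in>?X. m a) + j * (\<Sum>a\<in>?X. charfun \<alpha>2 a) - j * (\<Sum>a\<in>?X. charfun \<alpha>1 a)"
      by (simp add: move_weight_def sum.distrib sum_subtractf sum_distrib_left algebra_simps)
    then show ?thesis using arrows that by (simp add: charfun_sum)
  qed
  have nonneg: "0 \<le> move_weight m j a" for a
    using nabla_int_nonneg[OF assms(1), of a] assms(2,3) arrows(3)
    by (cases "a = \<alpha>1 \<or> a = \<alpha>2") (auto simp: move_weight_def charfun_def)
  have outside: "move_weight m j a = 0" if "a \<notin> A" for a
  proof -
    have "a \<noteq> \<alpha>1" "a \<noteq> \<alpha>2" using that arrows(1,2) by auto
    then show ?thesis using nabla_int_outside[OF assms(1) that] by (simp add: move_weight_def charfun_def)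
  qed
  show ?thesis unfolding nabla_int_def mem_Collect_eq
  proof (intro conjI allI ballI impI outside nonneg)
    fix v assume "v \<in> V"
    then show "\<theta> v = (\<Sum>a\<in>{a\<in>A. tgt a = v}. move_weight m j a) -
        (\<Sum>a\<in>{a\<in>A. src a = v}. move_weight m j a)"
      using assms(1) \<open>v \<in> V\<close> sums[of tgt v, OF same_ends(2)] sums[of src v, OF same_ends(1)]
      unfolding nabla_int_def by simp
  qed
qed

lemma pimap_move_weight [simp]: "pimap \<alpha>1 \<alpha>2 (move_weight m j) = pimap \<alpha>1 \<alpha>2 m"
  using arrows by (auto simp: pimap_def move_weight_def charfun_def fun_eq_iff)

lemma move_weight_move_weight [simp]: "move_weight (move_weight m j) k = move_weight m (j + k)"
  by (auto simp: move_weight_def fun_eq_iff algebra_simps)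

lemma move_weight_0 [simp]: "move_weight m 0 = m"
  by (simp add: move_weight_def)

lemma move_weight_\<alpha>1 [simp]: "move_weight m j \<alpha>1 = m \<alpha>1 - j"
  and move_weight_\<alpha>2 [simp]: "move_weight m j \<alpha>2 = m \<alpha>2 + j"
  using arrows by (auto simp: move_weight_def charfun_def)

lemma move_weight_1: "move_weight m 1 = (\<lambda>b. m b + charfun \<alpha>2 b - charfun \<alpha>1 b)"
  and move_weight_minus_1: "move_weight n (- 1) = (\<lambda>b. n b + charfun \<alpha>1 b - charfun \<alpha>2 b)"
  by (auto simp: move_weight_def fun_eq_iff)

lemma expsum_move_weight_pair:
  "expsum (Poly_Mapping.single (move_weight m j) 1 + Poly_Mapping.single (move_weight n (- j)) 1)
    = expsum (Poly_Mapping.single m 1 + Poly_Mapping.single n 1)"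
  by (simp add: expsum_add move_weight_def fun_eq_iff algebra_simps)

lemma pimap_eq_imp_move_weight:
  assumes "pimap \<alpha>1 \<alpha>2 m' = pimap \<alpha>1 \<alpha>2 m"
  shows "m' = move_weight m (m \<alpha>1 - m' \<alpha>1)"
proof
  fix b
  have "m' b = m b" if "b \<noteq> \<alpha>1" "b \<noteq> \<alpha>2"
    using fun_cong[OF assms, of b] that by (simp add: pimap_def)
  moreover have "m' \<alpha>1 + m' \<alpha>2 = m \<alpha>1 + m \<alpha>2"
    using fun_cong[OF assms, of \<alpha>1] by (simp add: pimap_def)
  ultimately show "m' b = move_weight m (m \<alpha>1 - m' \<alpha>1) b"
    using arrows(3) by (cases "b = \<alpha>1 \<or> b = \<alpha>2") (auto simp: move_weight_def charfun_def)
qed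

definition G2 :: "((('a \<Rightarrow> int) \<Rightarrow>\<^sub>0 nat) \<Rightarrow>\<^sub>0 complex) set" where
  "G2 = {tvar m * tvar n - tvar (\<lambda>b. m b + charfun \<alpha>2 b - charfun \<alpha>1 b) *
                             tvar (\<lambda>b. n b + charfun \<alpha>1 b - charfun \<alpha>2 b) | m n.
           m \<in> L \<and> n \<in> L \<and> m \<alpha>1 > 0 \<and> n \<alpha>2 > 0}"

lemma G2_element:
  assumes "m \<in> L" "n \<in> L" "0 < m \<alpha>1" "0 < n \<alpha>2"
  shows "mono (Poly_Mapping.single m 1 + Poly_Mapping.single n 1) -
      mono (Poly_Mapping.single (move_weight m 1) 1 + Poly_Mapping.single (move_weight n (- 1)) 1) \<in> G2"
  unfolding G2_def tvar_def mono_add_eq_mult move_weight_1 move_weight_minus_1 using assms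
  by (intro CollectI exI[of _ m] exI[of _ n]) simp

lemma G2_binomial:
  assumes "g \<in> G2"
  shows "\<exists>x y. g = mono x - mono y \<and> Poly_Mapping.keys x \<subseteq> L \<and> Poly_Mapping.keys y \<subseteq> L \<and>
           expsum x = expsum y"
proof -
  obtain m n where mn: "m \<in> L" "n \<in> L" "0 < m \<alpha>1" "0 < n \<alpha>2"
    and g: "g = tvar m * tvar n - tvar (\<lambda>b. m b + charfun \<alpha>2 b - charfun \<alpha>1 b) *
                                    tvar (\<lambda>b. n b + charfun \<alpha>1 b - charfun \<alpha>2 b)"
    using assms unfolding G2_def by blast
  let ?x = "Poly_Mapping.single m 1 + Poly_Mapping.single n 1 :: ('a \<Rightarrow> int) \<Rightarrow>\<^sub>0 nat"
  let ?y = "Poly_Mapping.single (move_weight m 1) 1 + Poly_Mapping.single (move_weight n (- 1)) 1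
    :: ('a \<Rightarrow> int) \<Rightarrow>\<^sub>0 nat"
  have "g = mono ?x - mono ?y"
    unfolding g tvar_def mono_add_eq_mult move_weight_1 move_weight_minus_1 ..
  moreover have "move_weight m 1 \<in> L" "move_weight n (- 1) \<in> L"
    using mn nabla_int_nonneg[OF mn(1), of \<alpha>2] nabla_int_nonneg[OF mn(2), of \<alpha>1]
    by (simp_all add: move_weight_mem_L)
  then have "Poly_Mapping.keys ?x \<subseteq> L" "Poly_Mapping.keys ?y \<subseteq> L"
    using mn(1,2) by (simp_all add: keys_add_nat)
  moreover have "expsum ?x = expsum ?y"
    using expsum_move_weight_pair[of m 1 n] by simp
  ultimately show ?thesis by blast
qed

lemma binomial_equiv_G2_step:
  assumes "G2 \<subseteq> G" "m \<in> L" "n \<in> L" "0 < m \<alpha>1" "0 < n \<alpha>2"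
  shows "binomial_equiv (polyring L) G (Poly_Mapping.single m 1 + Poly_Mapping.single n 1)
           (Poly_Mapping.single (move_weight m 1) 1 + Poly_Mapping.single (move_weight n (- 1)) 1)"
proof -
  have "mono (Poly_Mapping.single m 1 + Poly_Mapping.single n 1) -
      mono (Poly_Mapping.single (move_weight m 1) 1 + Poly_Mapping.single (move_weight n (- 1)) 1) \<in> G"
    using G2_element[OF assms(2-5)] assms(1) by blast
  then show ?thesis unfolding binomial_equiv_def by (rule ideal_gen_in_generator[OF is_subring_polyring])
qed

text \<open>Each step pairs m with a factor carrying weight on alpha2 and applies a G2 binomial.\<close>
lemma move_weight_within_monomial:
  assumes "G2 \<subseteq> G"
  shows "Poly_Mapping.keys a \<subseteq> L \<Longrightarrow> m \<in> Poly_Mapping.keys a \<Longrightarrow> int k \<le> m \<alpha>1 \<Longrightarrow>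
    int k \<le> expsum (a - Poly_Mapping.single m 1) \<alpha>2 \<Longrightarrow>
    \<exists>a'. binomial_equiv (polyring L) G a a' \<and> Poly_Mapping.keys a' \<subseteq> L \<and>
      pimon \<alpha>1 \<alpha>2 a' = pimon \<alpha>1 \<alpha>2 a \<and> expsum a' = expsum a \<and> move_weight m (int k) \<in> Poly_Mapping.keys a'"
proof (induction k arbitrary: a m)
  case 0
  then show ?case by (intro exI[of _ a]) (simp add: binomial_equiv_refl)
next
  case (Suc k a m)
  define r where "r = a - Poly_Mapping.single m 1"
  have "0 < expsum r \<alpha>2" using Suc.prems(4) unfolding r_def by simp
  then obtain n where n: "n \<in> Poly_Mapping.keys r" "0 < n \<alpha>2" using expsum_pos_imp_factor by meson
  define r' where "r' = r - Poly_Mapping.single n 1"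
  have "a = Poly_Mapping.single m 1 + r" unfolding r_def by (rule split_off_key[OF Suc.prems(2)])
  moreover have "r = Poly_Mapping.single n 1 + r'" unfolding r'_def by (rule split_off_key[OF n(1)])
  ultimately have a_eq: "a = (Poly_Mapping.single m 1 + Poly_Mapping.single n 1) + r'"
    by (simp add: ac_simps)
  have r_keys: "Poly_Mapping.keys r \<subseteq> Poly_Mapping.keys a" "Poly_Mapping.keys r' \<subseteq> Poly_Mapping.keys r"
    unfolding r_def r'_def by (simp_all add: keys_diff_subset_nat)
  have mL: "m \<in> L" and nL: "n \<in> L" and r'L: "Poly_Mapping.keys r' \<subseteq> L"
    using Suc.prems(1,2) n(1) r_keys by auto
  have m_pos: "0 < m \<alpha>1" using Suc.prems(3) by simp
  let ?m1 = "move_weight m 1" and ?n1 = "move_weight n (- 1)"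
  define a1 where "a1 = (Poly_Mapping.single ?m1 1 + Poly_Mapping.single ?n1 1) + r'"
  have equiv1: "binomial_equiv (polyring L) G a a1"
    unfolding a_eq a1_def using r'L
    by (intro binomial_equiv_add_right[OF is_subring_polyring] binomial_equiv_G2_step[OF assms mL nL m_pos n(2)])
      (simp add: mono_in_polyring_iff)
  have "?m1 \<in> L" "?n1 \<in> L"
    using m_pos n(2) nabla_int_nonneg[OF mL, of \<alpha>2] nabla_int_nonneg[OF nL, of \<alpha>1] mL nL
    by (simp_all add: move_weight_mem_L)
  then have a1L: "Poly_Mapping.keys a1 \<subseteq> L" unfolding a1_def using r'L by (auto simp: keys_add_nat)
  have pimon1: "pimon \<alpha>1 \<alpha>2 a1 = pimon \<alpha>1 \<alpha>2 a"
    unfolding a1_def a_eq by (simp add: pimon_add)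
  have expsum1: "expsum a1 = expsum a"
    unfolding a1_def a_eq expsum_add[of _ r'] expsum_move_weight_pair ..
  have m1_key: "?m1 \<in> Poly_Mapping.keys a1" unfolding a1_def by (simp add: keys_add_nat)
  have m1_weight: "int k \<le> ?m1 \<alpha>1" using Suc.prems(3) by simp
  have "a1 - Poly_Mapping.single ?m1 1 = Poly_Mapping.single ?n1 1 + r'"
    unfolding a1_def by (simp add: add.assoc)
  then have "int k \<le> expsum (a1 - Poly_Mapping.single ?m1 1) \<alpha>2"
    using Suc.prems(4) unfolding r_def[symmetric] \<open>r = Poly_Mapping.single n 1 + r'\<close>
    by (simp add: expsum_add)
  from Suc.IH[OF a1L m1_key m1_weight this] obtain a' where a': "binomial_equiv (polyring L) G a1 a'"
      "Poly_Mapping.keys a' \<subseteq> L" "pimon \<alpha>1 \<alpha>2 a' = pimon \<alpha>1 \<alpha>2 a1" "expsum a' = expsum a1"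
      "move_weight ?m1 (int k) \<in> Poly_Mapping.keys a'"
    by blast
  have "binomial_equiv (polyring L) G a a'"
    by (rule binomial_equiv_trans[OF is_subring_polyring equiv1 a'(1)])
  moreover have "move_weight m (int (Suc k)) \<in> Poly_Mapping.keys a'"
    using a'(5) by (simp add: add.commute)
  ultimately show ?case using a'(2-4) pimon1 expsum1 by (intro exI[of _ a']) simp
qed

lemma reach_factor_in_fibre:
  assumes "G2 \<subseteq> G" "Poly_Mapping.keys a \<subseteq> L" "Poly_Mapping.keys b \<subseteq> L" "expsum a = expsum b"
    and m: "m \<in> Poly_Mapping.keys a" and m': "m' \<in> Poly_Mapping.keys b"
    and "pimap \<alpha>1 \<alpha>2 m' = pimap \<alpha>1 \<alpha>2 m" "m' \<alpha>1 \<le> m \<alpha>1"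
  shows "\<exists>a'. binomial_equiv (polyring L) G a a' \<and> Poly_Mapping.keys a' \<subseteq> L \<and>
           pimon \<alpha>1 \<alpha>2 a' = pimon \<alpha>1 \<alpha>2 a \<and> expsum a' = expsum a \<and> m' \<in> Poly_Mapping.keys a'"
proof -
  define j where "j = m \<alpha>1 - m' \<alpha>1"
  have j: "0 \<le> j" "m' = move_weight m j"
    using assms(8) pimap_eq_imp_move_weight[OF assms(7)] unfolding j_def by simp_all
  define ra where "ra = a - Poly_Mapping.single m 1"
  define rb where "rb = b - Poly_Mapping.single m' 1"
  have a_eq: "a = Poly_Mapping.single m 1 + ra" unfolding ra_def by (rule split_off_key[OF m])
  have b_eq: "b = Poly_Mapping.single m' 1 + rb" unfolding rb_def by (rule split_off_key[OF m'])
  have "Poly_Mapping.keys rb \<subseteq> L"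
    unfolding rb_def by (rule subset_trans[OF keys_diff_subset_nat assms(3)])
  then have "0 \<le> expsum rb \<alpha>2" by (rule expsum_nonneg)
  moreover have "expsum a \<alpha>2 = m \<alpha>2 + expsum ra \<alpha>2"
    by (subst a_eq) (simp add: expsum_add)
  moreover have "expsum b \<alpha>2 = m \<alpha>2 + j + expsum rb \<alpha>2"
    by (subst b_eq) (simp add: expsum_add j(2))
  ultimately have "j \<le> expsum ra \<alpha>2" using assms(4) by simp
  moreover have "m' \<in> L" using assms(3) m' by blast
  ultimately have "int (nat j) \<le> m \<alpha>1" "int (nat j) \<le> expsum (a - Poly_Mapping.single m 1) \<alpha>2"
    using j nabla_int_nonneg[of m' V A src tgt \<theta> \<alpha>1] unfolding ra_def j_def by simp_all
  from move_weight_within_monomial[OF assms(1,2) m this] show ?thesis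
    using j by simp
qed

lemma binomial_equiv_same_fibre:
  assumes "G2 \<subseteq> G"
  shows "Poly_Mapping.keys a \<subseteq> L \<Longrightarrow> Poly_Mapping.keys b \<subseteq> L \<Longrightarrow>
    pimon \<alpha>1 \<alpha>2 a = pimon \<alpha>1 \<alpha>2 b \<Longrightarrow> expsum a = expsum b \<Longrightarrow> binomial_equiv (polyring L) G a b"
proof (induction "mdeg a" arbitrary: a b)
  case 0
  then have "mdeg a = 0" "mdeg b = 0"
    using mdeg_pimon[of \<alpha>1 \<alpha>2 a] mdeg_pimon[of \<alpha>1 \<alpha>2 b] by simp_all
  then show ?case by (simp add: mdeg_eq_0_iff binomial_equiv_refl)
next
  case (Suc d a b)
  have "a \<noteq> 0" using Suc.hyps(2) mdeg_eq_0_iff[of a] by auto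
  then have "Poly_Mapping.keys a \<noteq> {}" by simp
  then obtain m where m: "m \<in> Poly_Mapping.keys a" by blast
  have "pimap \<alpha>1 \<alpha>2 m \<in> Poly_Mapping.keys (pimon \<alpha>1 \<alpha>2 b)"
    using pimap_in_keys_pimon[OF m, of \<alpha>1 \<alpha>2] Suc.prems(3) by simp
  from subsetD[OF keys_pimon this] obtain m' where m': "m' \<in> Poly_Mapping.keys b"
    "pimap \<alpha>1 \<alpha>2 m' = pimap \<alpha>1 \<alpha>2 m"
    by (metis imageE)
  have mdeg_fibre: "mdeg x = mdeg y" if "pimon \<alpha>1 \<alpha>2 x = pimon \<alpha>1 \<alpha>2 y" for x y
    using mdeg_pimon[of \<alpha>1 \<alpha>2 x] mdeg_pimon[of \<alpha>1 \<alpha>2 y] that by simp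
  text \<open>Make the two monomials share a factor by moving weight within the one whose factor has
    more weight on alpha1.\<close>
  obtain a' b' c where equiv: "binomial_equiv (polyring L) G a a'" "binomial_equiv (polyring L) G b b'"
    and L: "Poly_Mapping.keys a' \<subseteq> L" "Poly_Mapping.keys b' \<subseteq> L"
    and fibre: "pimon \<alpha>1 \<alpha>2 a' = pimon \<alpha>1 \<alpha>2 b'" "expsum a' = expsum b'" "mdeg a' = Suc d"
    and c: "c \<in> Poly_Mapping.keys a'" "c \<in> Poly_Mapping.keys b'"
  proof (cases "m' \<alpha>1 \<le> m \<alpha>1")
    case True
    from reach_factor_in_fibre[OF assms Suc.prems(1,2,4) m m' this] obtain a' where a':
      "binomial_equiv (polyring L) G a a'" "Poly_Mapping.keys a' \<subseteq> L"
      "pimon \<alpha>1 \<alpha>2 a' = pimon \<alpha>1 \<alpha>2 a" "expsum a' = expsum a" "m' \<in> Poly_Mapping.keys a'"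
      by blast
    show ?thesis
      by (rule that[of a' b m'])
        (use a' Suc.prems Suc.hyps(2) m'(1) mdeg_fibre[OF a'(3)] in \<open>simp_all add: binomial_equiv_refl\<close>)
  next
    case False
    then have "m \<alpha>1 \<le> m' \<alpha>1" by simp
    from reach_factor_in_fibre[OF assms Suc.prems(2,1) Suc.prems(4)[symmetric] m'(1) m m'(2)[symmetric] this]
    obtain b' where b':
      "binomial_equiv (polyring L) G b b'" "Poly_Mapping.keys b' \<subseteq> L"
      "pimon \<alpha>1 \<alpha>2 b' = pimon \<alpha>1 \<alpha>2 b" "expsum b' = expsum b" "m \<in> Poly_Mapping.keys b'"
      by blast
    show ?thesis
      by (rule that[of a b' m])
        (use b' Suc.prems Suc.hyps(2) m in \<open>simp_all add: binomial_equiv_refl\<close>)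
  qed
  define a0 where "a0 = a' - Poly_Mapping.single c 1"
  define b0 where "b0 = b' - Poly_Mapping.single c 1"
  have a'_eq: "a' = a0 + Poly_Mapping.single c 1"
    unfolding a0_def using split_off_key[OF c(1)] by (simp add: add.commute)
  have b'_eq: "b' = b0 + Poly_Mapping.single c 1"
    unfolding b0_def using split_off_key[OF c(2)] by (simp add: add.commute)
  have "binomial_equiv (polyring L) G a0 b0"
  proof (rule Suc.hyps(1))
    show "d = mdeg a0" using fibre(3) unfolding a'_eq by (simp add: mdeg_add)
    show "Poly_Mapping.keys a0 \<subseteq> L" "Poly_Mapping.keys b0 \<subseteq> L"
      using L unfolding a'_eq b'_eq by (simp_all add: keys_add_nat)
    show "pimon \<alpha>1 \<alpha>2 a0 = pimon \<alpha>1 \<alpha>2 b0"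
      using fibre(1) unfolding a'_eq b'_eq by (simp add: pimon_add)
    show "expsum a0 = expsum b0"
    proof
      fix x
      show "expsum a0 x = expsum b0 x"
        using fun_cong[OF fibre(2), of x] unfolding a'_eq b'_eq by (simp add: expsum_add)
    qed
  qed
  then have "binomial_equiv (polyring L) G a' b'"
    unfolding a'_eq b'_eq using L(1) c(1)
    by (intro binomial_equiv_add_right[OF is_subring_polyring]) (auto simp: mono_in_polyring_iff)
  with equiv show ?case
    by (meson binomial_equiv_trans binomial_equiv_sym is_subring_polyring)
qed

end

section \<open>Lifting a presentation of the collapsed quiver\<close>

locale arrow_collapse_presentation = arrow_collapse V A src tgt \<theta> \<alpha>1 \<alpha>2
  for V :: "'v set" and A :: "'a set" and src tgt :: "'a \<Rightarrow> 'v"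
    and \<theta> :: "'v \<Rightarrow> int" and \<alpha>1 \<alpha>2 :: 'a +
  fixes \<psi> :: "('a \<Rightarrow> int) \<Rightarrow> (('a \<Rightarrow> int) \<Rightarrow>\<^sub>0 nat) \<Rightarrow> (('a \<Rightarrow> int) \<Rightarrow>\<^sub>0 nat)"
    and u v :: "'l \<Rightarrow> (('a \<Rightarrow> int) \<Rightarrow>\<^sub>0 nat)"
  assumes psi: "\<And>s w. s \<in> S_monoid V A src tgt \<theta> \<Longrightarrow> w \<in> monomials_in L' \<Longrightarrow>
                 phi (A - {\<alpha>2}) (mono w) = mono (xmon (A - {\<alpha>2}) (pimap \<alpha>1 \<alpha>2 s)) \<Longrightarrow>
                 \<psi> s w \<in> monomials_in L \<and> pimon \<alpha>1 \<alpha>2 (\<psi> s w) = w \<and>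
                 phi A (mono (\<psi> s w)) = mono (xmon A s)"
    and uv_mon: "\<And>i. u i \<in> monomials_in L'" "\<And>i. v i \<in> monomials_in L'"
    and gens': "ideal_gen_in (polyring L') (range (\<lambda>i. mono (u i) - mono (v i))) = ker_phi (A - {\<alpha>2}) L'"
begin

definition G1 :: "((('a \<Rightarrow> int) \<Rightarrow>\<^sub>0 nat) \<Rightarrow>\<^sub>0 complex) set" where
  "G1 = {mono (\<psi> s (u i)) - mono (\<psi> s (v i)) | i s.
           s \<in> S_monoid V A src tgt \<theta> \<and> mono (xmon (A - {\<alpha>2}) (pimap \<alpha>1 \<alpha>2 s)) = phi (A - {\<alpha>2}) (mono (u i))}"

abbreviation congruent :: "(('a \<Rightarrow> int) \<Rightarrow>\<^sub>0 nat) \<Rightarrow> (('a \<Rightarrow> int) \<Rightarrow>\<^sub>0 nat) \<Rightarrow> bool" where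
  "congruent \<equiv> binomial_equiv (polyring L) (G1 \<union> G2)"

lemma keys_u_v: "Poly_Mapping.keys (u i) \<subseteq> L'" "Poly_Mapping.keys (v i) \<subseteq> L'"
  using uv_mon[of i] by (simp_all add: monomials_in_def)

lemma phi_u_eq_phi_v: "phi (A - {\<alpha>2}) (mono (u i)) = phi (A - {\<alpha>2}) (mono (v i))"
proof -
  have "mono (u i) - mono (v i) \<in> ker_phi (A - {\<alpha>2}) L'"
    unfolding gens'[symmetric] by (rule ideal_gen_in_generator[OF is_subring_polyring]) blast
  then show ?thesis by (simp add: ker_phi_def phi_diff)
qed

lemma psi_lift:
  assumes "s \<in> S_monoid V A src tgt \<theta>" "Poly_Mapping.keys w \<subseteq> L'"
    and "phi (A - {\<alpha>2}) (mono w) = mono (xmon (A - {\<alpha>2}) (pimap \<alpha>1 \<alpha>2 s))"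
  shows "Poly_Mapping.keys (\<psi> s w) \<subseteq> L" "pimon \<alpha>1 \<alpha>2 (\<psi> s w) = w" "expsum (\<psi> s w) = s"
proof -
  have w: "w \<in> monomials_in L'" using assms(2) by (simp add: monomials_in_def)
  show keys: "Poly_Mapping.keys (\<psi> s w) \<subseteq> L" and "pimon \<alpha>1 \<alpha>2 (\<psi> s w) = w"
    using psi[OF assms(1) w assms(3)] by (simp_all add: monomials_in_def)
  have "xmon A (expsum (\<psi> s w)) = xmon A s"
    using psi[OF assms(1) w assms(3)] by (simp add: phi_mono mono_eq_iff)
  then show "expsum (\<psi> s w) = s"
    by (intro xmon_inj[OF finite_arrows])
      (use expsum_nonneg[OF keys] expsum_outside[OF keys] S_monoid_nonneg[OF assms(1)]
        S_monoid_outside[OF assms(1)] in auto)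
qed

lemma G1_binomial:
  assumes "g \<in> G1"
  shows "\<exists>x y. g = mono x - mono y \<and> Poly_Mapping.keys x \<subseteq> L \<and> Poly_Mapping.keys y \<subseteq> L \<and>
           expsum x = expsum y"
proof -
  obtain i s where g: "g = mono (\<psi> s (u i)) - mono (\<psi> s (v i))" "s \<in> S_monoid V A src tgt \<theta>"
    and u: "phi (A - {\<alpha>2}) (mono (u i)) = mono (xmon (A - {\<alpha>2}) (pimap \<alpha>1 \<alpha>2 s))"
    using assms unfolding G1_def by auto
  note lift_u = psi_lift[OF g(2) keys_u_v(1) u]
  note lift_v = psi_lift[OF g(2) keys_u_v(2) u[unfolded phi_u_eq_phi_v]]
  show ?thesis using g(1) lift_u lift_v by (intro exI[of _ "\<psi> s (u i)"] exI[of _ "\<psi> s (v i)"]) simp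
qed

lemma congruent_G1:
  assumes "s \<in> S_monoid V A src tgt \<theta>"
    and "phi (A - {\<alpha>2}) (mono (u i)) = mono (xmon (A - {\<alpha>2}) (pimap \<alpha>1 \<alpha>2 s))"
  shows "congruent (\<psi> s (u i)) (\<psi> s (v i))"
proof -
  have "mono (\<psi> s (u i)) - mono (\<psi> s (v i)) \<in> G1"
    unfolding G1_def using assms by (intro CollectI exI[of _ i] exI[of _ s]) simp
  then have "mono (\<psi> s (u i)) - mono (\<psi> s (v i)) \<in> G1 \<union> G2" by (rule UnI1)
  then show ?thesis unfolding binomial_equiv_def by (rule ideal_gen_in_generator[OF is_subring_polyring])
qed

text \<open>A move w + p to w + q downstairs lifts: split off the part a2 of a lying over p, replace it
  within its fibre by the chosen lift of p (using G2), and then by the lift of q (using G1).\<close>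
lemma lift_move:
  assumes aL: "Poly_Mapping.keys a \<subseteq> L" and pa: "pimon \<alpha>1 \<alpha>2 a = w + p"
    and pq: "Poly_Mapping.keys p \<subseteq> L'" "Poly_Mapping.keys q \<subseteq> L'"
      "phi (A - {\<alpha>2}) (mono p) = phi (A - {\<alpha>2}) (mono q)"
    and lifts: "\<And>s. s \<in> S_monoid V A src tgt \<theta> \<Longrightarrow>
      phi (A - {\<alpha>2}) (mono p) = mono (xmon (A - {\<alpha>2}) (pimap \<alpha>1 \<alpha>2 s)) \<Longrightarrow> congruent (\<psi> s p) (\<psi> s q)"
  shows "\<exists>a'. congruent a a' \<and> Poly_Mapping.keys a' \<subseteq> L \<and> pimon \<alpha>1 \<alpha>2 a' = w + q \<and> expsum a' = expsum a"
proof -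
  from pimon_eq_add_split[OF pa] obtain a1 a2
    where a: "a = a1 + a2" "pimon \<alpha>1 \<alpha>2 a1 = w" "pimon \<alpha>1 \<alpha>2 a2 = p"
    by blast
  have a1L: "Poly_Mapping.keys a1 \<subseteq> L" and a2L: "Poly_Mapping.keys a2 \<subseteq> L"
    using aL unfolding a(1) by (simp_all add: keys_add_nat)
  define s where "s = expsum a2"
  have s: "s \<in> S_monoid V A src tgt \<theta>" unfolding s_def by (rule expsum_mem_S_monoid[OF a2L])
  have p_s: "phi (A - {\<alpha>2}) (mono p) = mono (xmon (A - {\<alpha>2}) (pimap \<alpha>1 \<alpha>2 s))"
    unfolding s_def a(3)[symmetric] by (simp add: phi_mono expsum_pimon)
  note lift_p = psi_lift[OF s pq(1) p_s]
  note lift_q = psi_lift[OF s pq(2) p_s[unfolded pq(3)]]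
  have "congruent a2 (\<psi> s p)"
    using binomial_equiv_same_fibre[OF _ a2L lift_p(1)] lift_p(2,3) a(3) unfolding s_def by simp
  then have "congruent a2 (\<psi> s q)"
    by (rule binomial_equiv_trans[OF is_subring_polyring _ lifts[OF s p_s]])
  then have "congruent (a2 + a1) (\<psi> s q + a1)"
    using a1L by (intro binomial_equiv_add_right[OF is_subring_polyring]) (simp_all add: mono_in_polyring_iff)
  then have "congruent a (a1 + \<psi> s q)"
    unfolding a(1) by (simp add: add.commute)
  moreover have "Poly_Mapping.keys (a1 + \<psi> s q) \<subseteq> L"
    using a1L lift_q(1) by (simp add: keys_add_nat)
  moreover have "pimon \<alpha>1 \<alpha>2 (a1 + \<psi> s q) = w + q"
    using a(2) lift_q(2) by (simp add: pimon_add)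
  moreover have "expsum (a1 + \<psi> s q) = expsum a"
    using lift_q(3) unfolding a(1) s_def by (simp add: expsum_add)
  ultimately show ?thesis by blast
qed

lemma lift_moves:
  assumes "(binomial_move u v)\<^sup>*\<^sup>* (pimon \<alpha>1 \<alpha>2 a) y" "Poly_Mapping.keys a \<subseteq> L"
  shows "\<exists>a'. congruent a a' \<and> Poly_Mapping.keys a' \<subseteq> L \<and> pimon \<alpha>1 \<alpha>2 a' = y \<and> expsum a' = expsum a"
  using assms(1)
proof (induction rule: rtranclp_induct)
  case base
  then show ?case using assms(2) by (intro exI[of _ a]) (simp add: binomial_equiv_refl)
next
  case (step y z)
  from step.IH obtain a' where a': "congruent a a'" "Poly_Mapping.keys a' \<subseteq> L"
    "pimon \<alpha>1 \<alpha>2 a' = y" "expsum a' = expsum a"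
    by blast
  from step.hyps(2) obtain w i where
    "y = w + u i \<and> z = w + v i \<or> y = w + v i \<and> z = w + u i"
    unfolding binomial_move_def by blast
  then obtain a'' where a'': "congruent a' a''" "Poly_Mapping.keys a'' \<subseteq> L"
    "pimon \<alpha>1 \<alpha>2 a'' = z" "expsum a'' = expsum a'"
  proof
    assume yz: "y = w + u i \<and> z = w + v i"
    then have "pimon \<alpha>1 \<alpha>2 a' = w + u i" using a'(3) by simp
    from lift_move[OF a'(2) this keys_u_v phi_u_eq_phi_v congruent_G1] obtain b where
      b: "congruent a' b" "Poly_Mapping.keys b \<subseteq> L" "pimon \<alpha>1 \<alpha>2 b = w + v i" "expsum b = expsum a'"
      by blast
    show ?thesis by (rule that[OF b(1,2) _ b(4)]) (use b(3) yz in simp)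
  next
    assume yz: "y = w + v i \<and> z = w + u i"
    then have a'_v: "pimon \<alpha>1 \<alpha>2 a' = w + v i" using a'(3) by simp
    have lifts_v_u: "congruent (\<psi> s (v i)) (\<psi> s (u i))"
      if "s \<in> S_monoid V A src tgt \<theta>"
        "phi (A - {\<alpha>2}) (mono (v i)) = mono (xmon (A - {\<alpha>2}) (pimap \<alpha>1 \<alpha>2 s))" for s
    proof -
      have "phi (A - {\<alpha>2}) (mono (u i)) = mono (xmon (A - {\<alpha>2}) (pimap \<alpha>1 \<alpha>2 s))"
        using that(2) phi_u_eq_phi_v[of i] by simp
      from congruent_G1[OF that(1) this] show ?thesis
        by (rule binomial_equiv_sym[OF is_subring_polyring])
    qed
    from lift_move[OF a'(2) a'_v keys_u_v(2,1) phi_u_eq_phi_v[symmetric] lifts_v_u] obtain b where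
      b: "congruent a' b" "Poly_Mapping.keys b \<subseteq> L" "pimon \<alpha>1 \<alpha>2 b = w + u i" "expsum b = expsum a'"
      by blast
    show ?thesis by (rule that[OF b(1,2) _ b(4)]) (use b(3) yz in simp)
  qed
  show ?case
    using binomial_equiv_trans[OF is_subring_polyring a'(1) a''(1)] a''(2,3) a''(4) a'(4)
    by (intro exI[of _ a'']) simp
qed

lemma congruent_if_expsum_eq:
  assumes aL: "Poly_Mapping.keys a \<subseteq> L" and bL: "Poly_Mapping.keys b \<subseteq> L" and "expsum a = expsum b"
  shows "congruent a b"
proof -
  have "mono (pimon \<alpha>1 \<alpha>2 a) - mono (pimon \<alpha>1 \<alpha>2 b) \<in> ker_phi (A - {\<alpha>2}) L'"
    using keys_pimon_subset_L'[OF aL] keys_pimon_subset_L'[OF bL] \<open>expsum a = expsum b\<close>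
    by (simp add: ker_phi_def phi_diff phi_mono expsum_pimon mono_in_polyring_iff
        is_subring_diff[OF is_subring_polyring])
  then have "(binomial_move u v)\<^sup>*\<^sup>* (pimon \<alpha>1 \<alpha>2 a) (pimon \<alpha>1 \<alpha>2 b)"
    unfolding gens'[symmetric] by (rule binomial_ideal_moves)
  from lift_moves[OF this aL] obtain a' where a': "congruent a a'" "Poly_Mapping.keys a' \<subseteq> L"
    "pimon \<alpha>1 \<alpha>2 a' = pimon \<alpha>1 \<alpha>2 b" "expsum a' = expsum a"
    by blast
  have "congruent a' b"
    using binomial_equiv_same_fibre[OF _ a'(2) bL a'(3)] a'(4) \<open>expsum a = expsum b\<close> by simp
  then show ?thesis by (rule binomial_equiv_trans[OF is_subring_polyring a'(1)])
qed

theorem ideal_gen_in_eq_ker_phi: "ideal_gen_in (polyring L) (G1 \<union> G2) = ker_phi A L"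
proof
  show "ideal_gen_in (polyring L) (G1 \<union> G2) \<subseteq> ker_phi A L"
    using G1_binomial G2_binomial by (intro ideal_gen_in_subset_ker_phi[OF finite_arrows]) blast
  show "ker_phi A L \<subseteq> ideal_gen_in (polyring L) (G1 \<union> G2)"
    using congruent_if_expsum_eq by (intro ker_phi_subset_ideal_gen_in[OF finite_arrows])
qed

end

theorem proposition9p4:
  fixes V :: "'v set" and A :: "'a set" and src tgt :: "'a \<Rightarrow> 'v"
    and \<theta> :: "'v \<Rightarrow> int" and \<alpha>1 \<alpha>2 :: 'a
    and \<psi> :: "('a \<Rightarrow> int) \<Rightarrow> (('a \<Rightarrow> int) \<Rightarrow>\<^sub>0 nat) \<Rightarrow> (('a \<Rightarrow> int) \<Rightarrow>\<^sub>0 nat)"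
    and u v :: "'l \<Rightarrow> (('a \<Rightarrow> int) \<Rightarrow>\<^sub>0 nat)"
  defines "L \<equiv> nabla_int V A src tgt \<theta>"
      and "L' \<equiv> nabla_int V (A - {\<alpha>2}) src tgt \<theta>"
      and "S \<equiv> S_monoid V A src tgt \<theta>"
  assumes quiver: "is_quiver V A src tgt"
    and acyclic: "no_oriented_cycles A src tgt"
    and arrows: "\<alpha>1 \<in> A" "\<alpha>2 \<in> A" "\<alpha>1 \<noteq> \<alpha>2"
    and same_ends: "src \<alpha>1 = src \<alpha>2" "tgt \<alpha>1 = tgt \<alpha>2"
    and psi: "\<And>s w. s \<in> S \<Longrightarrow> w \<in> monomials_in L' \<Longrightarrow>
                 phi (A - {\<alpha>2}) (mono w) = mono (xmon (A - {\<alpha>2}) (pimap \<alpha>1 \<alpha>2 s)) \<Longrightarrow>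
                 \<psi> s w \<in> monomials_in L \<and> pimon \<alpha>1 \<alpha>2 (\<psi> s w) = w \<and>
                 phi A (mono (\<psi> s w)) = mono (xmon A s)"
    and uv_mon: "\<And>i. u i \<in> monomials_in L'" "\<And>i. v i \<in> monomials_in L'"
    and gens': "ideal_gen_in (polyring L') (range (\<lambda>i. mono (u i) - mono (v i)))
                  = ker_phi (A - {\<alpha>2}) L'"
  shows "ideal_gen_in (polyring L)
           ({mono (\<psi> s (u i)) - mono (\<psi> s (v i)) | i s.
               s \<in> S \<and> mono (xmon (A - {\<alpha>2}) (pimap \<alpha>1 \<alpha>2 s)) = phi (A - {\<alpha>2}) (mono (u i))}
            \<union> {tvar m * tvar n - tvar (\<lambda>b. m b + charfun \<alpha>2 b - charfun \<alpha>1 b) * tvar (\<lambda>b. n b + charfun \<alpha>1 b - charfun \<alpha>2 b) | m n.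
               m \<in> L \<and> n \<in> L \<and> m \<alpha>1 > 0 \<and> n \<alpha>2 > 0})
         = ker_phi A L"
proof -
  interpret arrow_collapse_presentation V A src tgt \<theta> \<alpha>1 \<alpha>2 \<psi> u v
    by unfold_locales
      (fact quiver arrows same_ends psi[unfolded L_def L'_def S_def] uv_mon[unfolded L'_def]
        gens'[unfolded L'_def])+
  show ?thesis
    using ideal_gen_in_eq_ker_phi unfolding G1_def G2_def L_def S_def .
qed

end
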